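(* Let $\mathscr{D}$ be as in the context. Let $a=\{a_I\}_{I\in\mathscr{D}}$ with $a_I\ge0$ be a Carleson sequence. Let $\alpha:[1,\infty)\to\mathbb{R}_+$ be an increasing function with $\int_1^\infty\frac{dt}{t\alpha(t)}<\infty$, and let $u$ be a weight. Then for every $f\in L^2(u)$, $$\sum_{I\in\mathscr{D}}\frac{|\langle fu\rangle_I|^2}{\alpha(\mathbf{u}^*_I/\mathbf{u}_I)\,\mathbf{u}^*_I}\,a_I\,|I|\le C\,\|a\|_{\mathrm{Carl}}\,\|f\|^2_{L^2(u)},$$ where $C=4C_\alpha$ and $C_\alpha=\frac{1}{\alpha(1)}+\int_1^\infty\frac{dt}{t\alpha(t)}$.
   Context: Setting: $(\mathcal{X},\mu)$ is a $\sigma$-finite measure space with an increasing filtration of atomic $\sigma$-algebras $\mathfrak{S}_n$, $n\in\mathbb{Z}$. Each $\mathfrak{S}_n$ is generated by a countable disjoint collection $\mathscr{D}_n$ of sets of positive measure such that every set of $\mathfrak{S}_n$ is a union of sets of $\mathscr{D}_n$. Put $\mathscr{D}=\bigcup_n\mathscr{D}_n$; a set may lie in several $\mathscr{D}_n$, but not in all of them. Write $|A|=\mu(A)$ and $\langle f\rangle_I=|I|^{-1}\int_If\,d\mu$. Maximal function: $Mf(x)=\sup_{I\in\mathscr{D},\,x\in I}|I|^{-1}\int_I|f|\,d\mu$ is the martingale maximal function. Weights and bumps: a weight is a nonnegative function integrable on each $I\in\mathscr{D}$. We set $\mathbf{u}_I=\langle u\rangle_I$ and $\mathbf{u}^*_I=\langle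 M(u\mathbf{1}_I)\rangle_I$; note that $\mathbf{u}^*_I\ge\mathbf{u}_I$. Carleson sequences: $\|a\|_{\mathrm{Carl}}:=\sup_{I_0\in\mathscr{D}}|I_0|^{-1}\sum_{I\in\mathscr{D},\,I\subset I_0}|a_I|\,|I|$, and $a$ is Carleson if this is finite. *)

theory Defs
  imports "HOL-Analysis.Analysis"
begin

text \<open>Standing setting. D n is the countable generating partition of the atomic
sigma-algebra S_n = sigma_sets (space M) (D n); the filtration is increasing in n.\<close>

definition filtration_setting :: "'a measure \<Rightarrow> (int \<Rightarrow> 'a set set) \<Rightarrow> bool" where
  "filtration_setting M D \<longleftrightarrow>
     sigma_finite_measure M \<and>
     (\<forall>n. countable (D n) \<and> D n \<subseteq> sets M \<and> disjoint (D n) \<and>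
          (\<forall>I\<in>D n. 0 < emeasure M I \<and> emeasure M I < \<infinity>) \<and>
          (\<forall>A\<in>sigma_sets (space M) (D n). \<exists>F\<subseteq>D n. A = \<Union>F)) \<and>
     (\<forall>n. sigma_sets (space M) (D n) \<subseteq> sigma_sets (space M) (D (n + 1))) \<and>
     (\<forall>I. \<not> (\<forall>n. I \<in> D n))"

definition DD :: "(int \<Rightarrow> 'a set set) \<Rightarrow> 'a set set" where
  "DD D = (\<Union>n. D n)"

definition maxf :: "'a measure \<Rightarrow> (int \<Rightarrow> 'a set set) \<Rightarrow> ('a \<Rightarrow> real) \<Rightarrow> 'a \<Rightarrow> ennreal" where
  "maxf M D f x = (SUP I\<in>{I\<in>DD D. x \<in> I}. (\<integral>\<^sup>+ y\<in>I. ennreal \<bar>f y\<bar> \<partial>M) / emeasure M I)"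

definition avg :: "'a measure \<Rightarrow> 'a set \<Rightarrow> ('a \<Rightarrow> real) \<Rightarrow> real" where
  "avg M I g = (set_lebesgue_integral M I g) / measure M I"

definition ustar :: "'a measure \<Rightarrow> (int \<Rightarrow> 'a set set) \<Rightarrow> ('a \<Rightarrow> real) \<Rightarrow> 'a set \<Rightarrow> ennreal" where
  "ustar M D u I = (\<integral>\<^sup>+ x\<in>I. maxf M D (\<lambda>y. indicator I y * u y) x \<partial>M) / emeasure M I"

definition carl_norm :: "'a measure \<Rightarrow> (int \<Rightarrow> 'a set set) \<Rightarrow> ('a set \<Rightarrow> real) \<Rightarrow> ennreal" where
  "carl_norm M D a = (SUP I0\<in>DD D.
      (\<integral>\<^sup>+ I. ennreal (\<bar>a I\<bar> * measure M I) \<partial>count_space {I\<in>DD D. I \<subseteq> I0}) / emeasure M I0)"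

text \<open>Summand of the left-hand side.  If u*_I = \<infinity> the summand is 0 (limit of
  1/(\<alpha>(t) t) as t \<rightarrow> \<infinity>); if u_I = 0 then also <fu>_I = 0 and the summand is 0.\<close>
definition lhs_term :: "'a measure \<Rightarrow> (int \<Rightarrow> 'a set set) \<Rightarrow> (real \<Rightarrow> real) \<Rightarrow> ('a \<Rightarrow> real)
    \<Rightarrow> ('a \<Rightarrow> real) \<Rightarrow> ('a set \<Rightarrow> real) \<Rightarrow> 'a set \<Rightarrow> real" where
  "lhs_term M D \<alpha> u f a I =
     (if ustar M D u I = \<infinity> \<or> avg M I u = 0 then 0
      else (avg M I (\<lambda>x. f x * u x))\<^sup>2
             / (\<alpha> (enn2real (ustar M D u I) / avg M I u) * enn2real (ustar M D u I))
             * a I * measure M I)"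

end

theory Submission
  imports Defs
begin

text \<open>For a set I with finite u*_I and positive u_I write r_I = u*_I / u_I \<ge> 1,
  \<psi>(t) = 1 / (t \<alpha>(t)) and u(I) = \<integral>_I u. The summand of the theorem is then
  a_I u(I) \<psi>(r_I) (\<langle>fu\<rangle>_I / u_I)^2, so by the weighted Carleson embedding theorem (proved
  with the Bellman function 4 (X - Y^2 / (W + m))) it suffices to show the packing condition
  \<Sum>_{I \<subseteq> J} a_I u(I) \<psi>(r_I) \<le> C_\<alpha> ||a||_Carl u(J).
  A layer-cake comparison of Carleson sums with the maximal function gives
  \<Sum>_{I \<subseteq> J, r_I \<le> t} a_I u(I) \<le> t ||a||_Carl u(J) for every t \<ge> 1, since for the
  maximal such I the sum is at most ||a||_Carl u*_I |I| = ||a||_Carl r_I u(I). Summation by parts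
  against the decreasing function \<psi> turns this distributional bound into the packing
  condition with constant 1/\<alpha>(1) + \<integral>_1^\<infinity> \<psi>.\<close>

lemma power2_add_divide_add_le:
  fixes p q s t :: real
  assumes "0 \<le> s" "0 \<le> t" "s = 0 \<Longrightarrow> p = 0" "t = 0 \<Longrightarrow> q = 0"
  shows "(p + q)^2 / (s + t) \<le> p^2 / s + q^2 / t"
proof (cases "s = 0 \<or> t = 0")
  case True
  then show ?thesis using assms by auto
next
  case False
  then have s: "0 < s" and t: "0 < t" using assms by auto
  have "p^2 / s + q^2 / t - (p + q)^2 / (s + t) = (p * t - q * s)^2 / (s * t * (s + t))"
    using s t by (simp add: field_simps) algebra
  also have "\<dots> \<ge> 0" using s t by simp
  finally show ?thesis by simp
qed

lemma power2_sum_divide_sum_le: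
  fixes p s :: "'i \<Rightarrow> real"
  assumes "finite T" "\<forall>i\<in>T. 0 \<le> s i \<and> (s i = 0 \<longrightarrow> p i = 0)"
  shows "(\<Sum>i\<in>T. p i)^2 / (\<Sum>i\<in>T. s i) \<le> (\<Sum>i\<in>T. (p i)^2 / s i)"
  using assms
proof (induction T rule: finite_induct)
  case empty
  then show ?case by simp
next
  case (insert j T)
  have "0 \<le> (\<Sum>i\<in>T. s i)" using insert by (simp add: sum_nonneg)
  moreover have "(\<Sum>i\<in>T. p i) = 0" if "(\<Sum>i\<in>T. s i) = 0"
    using that insert by (simp add: sum_nonneg_eq_0_iff)
  ultimately have "(p j + (\<Sum>i\<in>T. p i))^2 / (s j + (\<Sum>i\<in>T. s i))
      \<le> (p j)^2 / s j + (\<Sum>i\<in>T. p i)^2 / (\<Sum>i\<in>T. s i)"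
    using insert by (intro power2_add_divide_add_le) auto
  then show ?case using insert by simp
qed

lemma bellman_jump_le:
  fixes w c m y :: real
  assumes "0 < w" "0 \<le> c" "c \<le> m" "m \<le> w"
  shows "c * (y / w)^2 \<le> 4 * y^2 / (w + m - c) - 4 * y^2 / (w + m)"
proof -
  have "(w + m - c) * (w + m) \<le> (2 * w) * (2 * w)"
    using assms by (intro mult_mono) auto
  moreover have "0 < (w + m - c) * (w + m)" using assms by simp
  ultimately have "4 * y^2 * c / (4 * w^2) \<le> 4 * y^2 * c / ((w + m - c) * (w + m))"
    using assms by (intro divide_left_mono) (auto simp: power2_eq_square)
  moreover have "4 * y^2 / (w + m - c) - 4 * y^2 / (w + m) = 4 * y^2 * c / ((w + m - c) * (w + m))"
    using assms by (simp add: field_simps)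
  ultimately show ?thesis using assms by (simp add: power_divide mult.commute)
qed

lemma set_integral_antitone_add_le:
  fixes \<psi> :: "real \<Rightarrow> real"
  assumes anti: "antimono_on {1..} \<psi>" and int: "set_integrable lborel {1..} \<psi>"
    and "1 \<le> \<rho>" "\<rho> \<le> s"
  shows "(LINT t:{1..\<rho>}|lborel. \<psi> t) + (s - \<rho>) * \<psi> s \<le> (LINT t:{1..s}|lborel. \<psi> t)"
proof -
  have int_on: "set_integrable lborel S \<psi>" if "S \<in> sets lborel" "S \<subseteq> {1..}" for S
    by (rule set_integrable_subset[OF int that])
  have "(s - \<rho>) * \<psi> s = (LINT t:{\<rho><..s}|lborel. \<psi> s)"
    using assms by (simp add: set_integral_const)
  also have "\<dots> \<le> (LINT t:{\<rho><..s}|lborel. \<psi> t)"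
    using assms by (intro set_integral_mono int_on monotone_onD[OF anti])
      (auto simp: set_integrable_def)
  finally have "(LINT t:{1..\<rho>}|lborel. \<psi> t) + (s - \<rho>) * \<psi> s
      \<le> (LINT t:{1..\<rho>}|lborel. \<psi> t) + (LINT t:{\<rho><..s}|lborel. \<psi> t)" by simp
  also have "\<dots> = (LINT t:{1..\<rho>} \<union> {\<rho><..s}|lborel. \<psi> t)"
    using assms by (intro set_integral_Un[symmetric] int_on) auto
  also have "{1..\<rho>} \<union> {\<rho><..s} = {1..s}" using assms by auto
  finally show ?thesis .
qed

text \<open>Abel summation against the distribution function of the r i: the invariant is
  kept while removing an index with the largest r i.\<close>

lemma sum_mult_antitone_le_aux:
  fixes \<psi> :: "real \<Rightarrow> real" and r W :: "'i \<Rightarrow> real"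
  assumes anti: "antimono_on {1..} \<psi>" and nonneg: "\<forall>t\<ge>1. 0 \<le> \<psi> t"
    and int: "set_integrable lborel {1..} \<psi>" and B: "\<forall>t\<ge>1. t * \<psi> t \<le> B" and K: "0 \<le> K"
    and "finite T" "\<forall>i\<in>T. 1 \<le> r i \<and> 0 \<le> W i"
    and "\<forall>t\<ge>1. (\<Sum>i\<in>{i\<in>T. r i \<le> t}. W i) \<le> K * t"
    and "1 \<le> s" "\<forall>i\<in>T. r i \<le> s"
  shows "(\<Sum>i\<in>T. W i * \<psi> (r i))
    \<le> K * (B + (LINT t:{1..s}|lborel. \<psi> t)) + ((\<Sum>i\<in>T. W i) - K * s) * \<psi> s"
  using assms(6-10)
proof (induction T arbitrary: s rule: finite_ranking_induct[where f = r])
  case empty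
  have "0 \<le> (LINT t:{1..s}|lborel. \<psi> t)"
    unfolding set_lebesgue_integral_def
    by (rule integral_nonneg_AE) (auto simp: nonneg split: split_indicator)
  then have "K * (s * \<psi> s) \<le> K * (B + (LINT t:{1..s}|lborel. \<psi> t))"
    using B empty.prems K by (intro mult_left_mono) auto
  then show ?case by (simp add: algebra_simps)
next
  case (insert j T)
  show ?case
  proof (cases "j \<in> T")
    case True
    then show ?thesis using insert by (simp add: insert_absorb)
  next
    case False
    note hyps = insert.prems(1) and dist = insert.prems(2) and s = insert.prems(3,4)
    define \<rho> where "\<rho> = r j"
    have \<rho>: "1 \<le> \<rho>" "\<rho> \<le> s" using hyps s unfolding \<rho>_def by auto
    have "(\<Sum>i\<in>{i\<in>T. r i \<le> t}. W i) \<le> K * t" if "1 \<le> t" for t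
    proof -
      have "(\<Sum>i\<in>{i\<in>T. r i \<le> t}. W i) \<le> (\<Sum>i\<in>{i\<in>insert j T. r i \<le> t}. W i)"
        using insert.hyps(1) hyps by (intro sum_mono2) auto
      then show ?thesis using dist that by fastforce
    qed
    then have IH: "(\<Sum>i\<in>T. W i * \<psi> (r i))
        \<le> K * (B + (LINT t:{1..\<rho>}|lborel. \<psi> t)) + ((\<Sum>i\<in>T. W i) - K * \<rho>) * \<psi> \<rho>"
      using insert.IH hyps \<rho> insert.hyps(2) unfolding \<rho>_def by auto
    have "{i\<in>insert j T. r i \<le> \<rho>} = insert j T" using insert.hyps(2) unfolding \<rho>_def by auto
    then have "(\<Sum>i\<in>insert j T. W i) \<le> K * \<rho>"
      using dist[rule_format, OF \<rho>(1)] by (simp only:)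
    then have total: "W j + (\<Sum>i\<in>T. W i) \<le> K * \<rho>" using insert.hyps(1) False by simp
    have "(W j + (\<Sum>i\<in>T. W i) - K * \<rho>) * \<psi> \<rho> \<le> (W j + (\<Sum>i\<in>T. W i) - K * \<rho>) * \<psi> s"
      using total monotone_onD[OF anti] \<rho> by (intro mult_left_mono_neg) auto
    moreover have "K * ((LINT t:{1..\<rho>}|lborel. \<psi> t) + (s - \<rho>) * \<psi> s)
        \<le> K * (LINT t:{1..s}|lborel. \<psi> t)"
      using set_integral_antitone_add_le[OF anti int \<rho>] K by (rule mult_left_mono)
    moreover have "(\<Sum>i\<in>insert j T. W i * \<psi> (r i)) = W j * \<psi> \<rho> + (\<Sum>i\<in>T. W i * \<psi> (r i))"
      "(\<Sum>i\<in>insert j T. W i) = W j + (\<Sum>i\<in>T. W i)"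
      using insert.hyps(1) False unfolding \<rho>_def by simp_all
    ultimately show ?thesis using IH by (simp only: ring_distribs)
  qed
qed

lemma sum_mult_antitone_le:
  fixes \<psi> :: "real \<Rightarrow> real" and r W :: "'i \<Rightarrow> real"
  assumes anti: "antimono_on {1..} \<psi>" and nonneg: "\<forall>t\<ge>1. 0 \<le> \<psi> t"
    and int: "set_integrable lborel {1..} \<psi>" and B: "\<forall>t\<ge>1. t * \<psi> t \<le> B" and K: "0 \<le> K"
    and T: "finite T" "\<forall>i\<in>T. 1 \<le> r i" "\<forall>i\<in>T. 0 \<le> W i"
    and dist: "\<forall>t\<ge>1. (\<Sum>i\<in>{i\<in>T. r i \<le> t}. W i) \<le> K * t"
  shows "(\<Sum>i\<in>T. W i * \<psi> (r i)) \<le> K * (B + (LINT t:{1..}|lborel. \<psi> t))"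
proof -
  define s where "s = Max (insert 1 (r ` T))"
  have s: "1 \<le> s" "\<forall>i\<in>T. r i \<le> s" using T unfolding s_def by auto
  have "(\<Sum>i\<in>T. W i * \<psi> (r i))
      \<le> K * (B + (LINT t:{1..s}|lborel. \<psi> t)) + ((\<Sum>i\<in>T. W i) - K * s) * \<psi> s"
    by (rule sum_mult_antitone_le_aux[OF anti nonneg int B K T(1)]) (use T dist s in auto)
  also have "((\<Sum>i\<in>T. W i) - K * s) * \<psi> s \<le> 0"
  proof -
    have "{i\<in>T. r i \<le> s} = T" using s by auto
    then have "(\<Sum>i\<in>T. W i) \<le> K * s" using dist s by metis
    then show ?thesis using nonneg s by (simp add: mult_nonpos_nonneg)
  qed
  also have "(LINT t:{1..s}|lborel. \<psi> t) \<le> (LINT t:{1..}|lborel. \<psi> t)"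
    using set_integrable_subset[OF int, of "{1..s}"] int nonneg
    unfolding set_lebesgue_integral_def set_integrable_def
    by (intro integral_mono) (auto split: split_indicator)
  finally show ?thesis using K by (simp add: mult_left_mono)
qed

section \<open>Laminar families\<close>

definition laminar :: "'a set set \<Rightarrow> bool" where
  "laminar S \<longleftrightarrow> (\<forall>I\<in>S. \<forall>J\<in>S. I \<subseteq> J \<or> J \<subseteq> I \<or> I \<inter> J = {})"

definition maximal_sets :: "'a set set \<Rightarrow> 'a set set" where
  "maximal_sets G = {L\<in>G. \<forall>K\<in>G. L \<subseteq> K \<longrightarrow> K = L}"

lemma laminar_subset: "laminar S \<Longrightarrow> G \<subseteq> S \<Longrightarrow> laminar G"
  unfolding laminar_def by blast

lemma maximal_sets_subset: "maximal_sets G \<subseteq> G"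
  unfolding maximal_sets_def by auto

lemma finite_maximal_sets: "finite G \<Longrightarrow> finite (maximal_sets G)"
  using finite_subset[OF maximal_sets_subset] .

lemma maximal_sets_cover:
  assumes "finite G" "I \<in> G"
  shows "\<exists>L\<in>maximal_sets G. I \<subseteq> L"
proof -
  obtain L where "L \<in> G" "I \<subseteq> L" "\<forall>K\<in>G. L \<subseteq> K \<longrightarrow> L = K"
    using finite_has_maximal2[OF assms] by blast
  then show ?thesis unfolding maximal_sets_def by blast
qed

lemma Union_maximal_sets: "finite G \<Longrightarrow> \<Union>(maximal_sets G) = \<Union>G"
  using maximal_sets_subset maximal_sets_cover by blast

lemma disjoint_family_maximal_sets:
  assumes "laminar G"
  shows "disjoint_family_on (\<lambda>L. L) (maximal_sets G)"
  unfolding disjoint_family_on_def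
proof (intro ballI impI)
  fix L1 L2 assume "L1 \<in> maximal_sets G" "L2 \<in> maximal_sets G" "L1 \<noteq> L2"
  then have "L1 \<in> G" "L2 \<in> G" "\<not> L1 \<subseteq> L2" "\<not> L2 \<subseteq> L1"
    unfolding maximal_sets_def by auto
  then show "L1 \<inter> L2 = {}" using assms unfolding laminar_def by blast
qed

lemma sum_maximal_sets:
  assumes "finite G" "laminar G" "{} \<notin> G"
  shows "(\<Sum>I\<in>G. g I) = (\<Sum>L\<in>maximal_sets G. \<Sum>I\<in>{I\<in>G. I \<subseteq> L}. g I)"
proof -
  have disj: "{I\<in>G. I \<subseteq> L1} \<inter> {I\<in>G. I \<subseteq> L2} = {}"
    if "L1 \<in> maximal_sets G" "L2 \<in> maximal_sets G" "L1 \<noteq> L2" for L1 L2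
  proof -
    have "L1 \<inter> L2 = {}"
      using disjoint_family_maximal_sets[OF assms(2)] that unfolding disjoint_family_on_def by auto
    moreover have "I \<noteq> {}" if "I \<in> G" for I using assms(3) that by blast
    ultimately show ?thesis by blast
  qed
  have "G = (\<Union>L\<in>maximal_sets G. {I\<in>G. I \<subseteq> L})"
    using maximal_sets_cover[OF assms(1)] by blast
  then have "(\<Sum>I\<in>G. g I) = (\<Sum>I\<in>(\<Union>L\<in>maximal_sets G. {I\<in>G. I \<subseteq> L}). g I)"
    by simp
  also have "\<dots> = (\<Sum>L\<in>maximal_sets G. \<Sum>I\<in>{I\<in>G. I \<subseteq> L}. g I)"
    by (rule sum.UNION_disjoint) (use assms(1) disj in \<open>auto simp: finite_maximal_sets\<close>)
  finally show ?thesis .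
qed

lemma sum_below_children:
  assumes "finite F" "laminar F" "{} \<notin> F" "J \<in> F"
  shows "(\<Sum>I\<in>{I\<in>F. I \<subseteq> J}. g I)
    = g J + (\<Sum>K\<in>maximal_sets {I\<in>F. I \<subset> J}. \<Sum>I\<in>{I\<in>F. I \<subseteq> K}. g I)"
proof -
  let ?S = "{I\<in>F. I \<subset> J}"
  have "{I\<in>F. I \<subseteq> J} = insert J ?S" "J \<notin> ?S" using assms by auto
  then have "(\<Sum>I\<in>{I\<in>F. I \<subseteq> J}. g I) = g J + (\<Sum>I\<in>?S. g I)"
    using assms(1) by simp
  also have "(\<Sum>I\<in>?S. g I) = (\<Sum>K\<in>maximal_sets ?S. \<Sum>I\<in>{I\<in>?S. I \<subseteq> K}. g I)"
    using assms by (intro sum_maximal_sets laminar_subset[OF assms(2)]) auto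
  also have "\<dots> = (\<Sum>K\<in>maximal_sets ?S. \<Sum>I\<in>{I\<in>F. I \<subseteq> K}. g I)"
  proof (rule sum.cong[OF refl])
    fix K assume "K \<in> maximal_sets ?S"
    then have "K \<subset> J" using maximal_sets_subset by blast
    then show "(\<Sum>I\<in>{I\<in>?S. I \<subseteq> K}. g I) = (\<Sum>I\<in>{I\<in>F. I \<subseteq> K}. g I)"
      by (intro sum.cong) auto
  qed
  finally show ?thesis .
qed

lemma nn_integral_count_space_le_finite_sums:
  fixes g :: "'i \<Rightarrow> ennreal"
  assumes S: "countable S" and B: "\<And>F. finite F \<Longrightarrow> F \<subseteq> S \<Longrightarrow> (\<Sum>x\<in>F. g x) \<le> B"
  shows "(\<integral>\<^sup>+ x. g x \<partial>count_space S) \<le> B"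
proof (cases "finite S")
  case True
  then show ?thesis using B[of S] by (simp add: nn_integral_count_space_finite)
next
  case False
  define h where "h = from_nat_into S"
  have bij: "bij_betw h UNIV S" unfolding h_def by (rule bij_betw_from_nat_into[OF S False])
  have "(\<integral>\<^sup>+ x. g x \<partial>count_space S) = (\<integral>\<^sup>+ n. g (h n) \<partial>count_space UNIV)"
    by (rule nn_integral_bij_count_space[OF bij, symmetric])
  also have "\<dots> = (SUP N. \<Sum>n<N. g (h n))"
    by (simp add: nn_integral_count_space_nat suminf_eq_SUP)
  also have "\<dots> \<le> B"
  proof (rule SUP_least)
    fix N
    have "inj_on h {..<N}" using bij unfolding bij_betw_def by (auto intro: inj_on_subset)
    then have "(\<Sum>n<N. g (h n)) = (\<Sum>x\<in>h ` {..<N}. g x)" by (simp add: sum.reindex)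
    also have "\<dots> \<le> B" using bij unfolding bij_betw_def by (intro B) auto
    finally show "(\<Sum>n<N. g (h n)) \<le> B" .
  qed
  finally show ?thesis .
qed

text \<open>The empty set in the maximum makes max_indicator G v vanish off \<Union>G.\<close>

definition max_indicator :: "'b set set \<Rightarrow> ('b set \<Rightarrow> real) \<Rightarrow> 'b \<Rightarrow> real" where
  "max_indicator G v x = Max ((\<lambda>I. v I * indicator I x) ` insert {} G)"

lemma max_indicator_ge: "finite G \<Longrightarrow> I \<in> G \<Longrightarrow> v I * indicator I x \<le> max_indicator G v x"
  unfolding max_indicator_def by (intro Max_ge) auto

lemma max_indicator_nonneg: "finite G \<Longrightarrow> 0 \<le> max_indicator G v x"
  unfolding max_indicator_def by (rule Max_ge_iff[THEN iffD2]) auto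

lemma max_indicator_attained:
  assumes "finite G"
  obtains I where "I \<in> insert {} G" "max_indicator G v x = v I * indicator I x"
proof -
  have "max_indicator G v x \<in> (\<lambda>I. v I * indicator I x) ` insert {} G"
    unfolding max_indicator_def using assms by (intro Max_in) auto
  then show ?thesis using that by blast
qed

lemma borel_measurable_max_indicator:
  "finite G \<Longrightarrow> G \<subseteq> sets M \<Longrightarrow> max_indicator G v \<in> borel_measurable M"
  unfolding max_indicator_def by (intro borel_measurable_Max) auto

lemma max_indicator_remove_min:
  assumes G: "finite G" "I0 \<in> G" "\<forall>I\<in>G. v I0 \<le> v I"
  shows "v I0 * indicator (\<Union>G) x + max_indicator (G - {I0}) (\<lambda>I. v I - v I0) x
    \<le> max_indicator G v x"
proof -
  obtain J where J: "J \<in> insert {} (G - {I0})"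
    "max_indicator (G - {I0}) (\<lambda>I. v I - v I0) x = (v J - v I0) * indicator J x"
    using max_indicator_attained G(1) by (metis finite_Diff)
  show ?thesis
  proof (cases "x \<in> J")
    case True
    then have "J \<in> G" "x \<in> \<Union>G" using J by auto
    then show ?thesis using J True max_indicator_ge[OF G(1), of J v x] by simp
  next
    case False
    show ?thesis
    proof (cases "x \<in> \<Union>G")
      case True
      then obtain K where "K \<in> G" "x \<in> K" by blast
      then have "v I0 \<le> v K * indicator K x" using G(3) by simp
      also have "\<dots> \<le> max_indicator G v x" using max_indicator_ge[OF G(1) \<open>K \<in> G\<close>] .
      finally show ?thesis using J(2) \<open>x \<notin> J\<close> True by simp
    next
      case False
      then show ?thesis using J \<open>x \<notin> J\<close> max_indicator_nonneg[OF G(1)] by simp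
    qed
  qed
qed

text \<open>A layer-cake argument: peel off the smallest value of v from all sets at once,
  using the packing condition on the union, and recurse on the remaining family.\<close>

lemma sum_mult_le_integral_max_indicator:
  fixes w v :: "'b set \<Rightarrow> real"
  assumes "finite G" "G \<subseteq> sets M" "0 \<le> A" "\<forall>I\<in>G. 0 \<le> w I" "\<forall>I\<in>G. 0 \<le> v I"
    and "\<forall>H\<subseteq>G. (\<Sum>I\<in>H. w I) \<le> A * measure M (\<Union>H)"
  shows "ennreal (\<Sum>I\<in>G. w I * v I) \<le> ennreal A * (\<integral>\<^sup>+ x. ennreal (max_indicator G v x) \<partial>M)"
  using assms
proof (induction "card G" arbitrary: G v rule: less_induct)
  case less
  show ?case
  proof (cases "G = {}")
    case True
    then show ?thesis by simp
  next
    case False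
    have "Min (v ` G) \<in> v ` G" using less.prems(1) False by (intro Min_in) auto
    then obtain I0 where "I0 \<in> G" "v I0 = Min (v ` G)" by auto
    then have I0: "I0 \<in> G" "\<forall>I\<in>G. v I0 \<le> v I" using less.prems(1) by auto
    define m where "m = v I0"
    define G' where "G' = G - {I0}"
    define v' where "v' I = v I - m" for I
    have m: "0 \<le> m" using less.prems(5) I0 unfolding m_def by auto
    have UG: "\<Union>G \<in> sets M" using less.prems(1,2) by blast
    have G': "finite G'" "G' \<subseteq> sets M" "\<forall>I\<in>G'. 0 \<le> v' I"
      using less.prems I0 unfolding G'_def v'_def m_def by auto
    have "card G' < card G" "\<forall>I\<in>G'. 0 \<le> w I" "\<forall>H\<subseteq>G'. (\<Sum>I\<in>H. w I) \<le> A * measure M (\<Union>H)"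
      using less.prems(4,6) card_Diff1_less[OF less.prems(1) I0(1)] unfolding G'_def by auto
    note IH = less.hyps[OF this(1) G'(1,2) less.prems(3) this(2) G'(3) this(3)]
    have nn: "0 \<le> (\<Sum>I\<in>G'. w I * v' I)" using less.prems(4) G'(3) unfolding G'_def
      by (intro sum_nonneg) auto
    have "(\<Sum>I\<in>G. w I * v I) = m * (\<Sum>I\<in>G. w I) + (\<Sum>I\<in>G'. w I * v' I)"
      using less.prems(1) I0(1) unfolding G'_def v'_def m_def
      by (simp add: sum.remove sum_distrib_left algebra_simps sum_subtractf)
    also have "\<dots> \<le> m * (A * measure M (\<Union>G)) + (\<Sum>I\<in>G'. w I * v' I)"
      using less.prems(6) m by (simp add: mult_left_mono)
    finally have "ennreal (\<Sum>I\<in>G. w I * v I)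
        \<le> ennreal A * (ennreal m * ennreal (measure M (\<Union>G))) + ennreal (\<Sum>I\<in>G'. w I * v' I)"
      using m less.prems(3) nn
      by (simp add: ennreal_plus[symmetric] ennreal_mult[symmetric] ac_simps del: ennreal_plus)
    also have "\<dots> \<le> ennreal A * (\<integral>\<^sup>+ x. ennreal m * indicator (\<Union>G) x \<partial>M)
        + ennreal A * (\<integral>\<^sup>+ x. ennreal (max_indicator G' v' x) \<partial>M)"
      using UG IH by (intro add_mono mult_left_mono)
        (auto simp: measure_def ennreal_enn2real_if nn_integral_cmult_indicator)
    also have "\<dots> = ennreal A * (\<integral>\<^sup>+ x. ennreal m * indicator (\<Union>G) x + ennreal (max_indicator G' v' x) \<partial>M)"
      using UG borel_measurable_max_indicator[OF G'(1,2)]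
      by (subst nn_integral_add) (auto simp: distrib_left)
    also have "\<dots> \<le> ennreal A * (\<integral>\<^sup>+ x. ennreal (max_indicator G v x) \<partial>M)"
    proof (intro mult_left_mono nn_integral_mono)
      fix x
      have "ennreal m * indicator (\<Union>G) x + ennreal (max_indicator G' v' x)
          = ennreal (m * indicator (\<Union>G) x + max_indicator G' v' x)"
        using m max_indicator_nonneg[OF G'(1)] by (simp add: ennreal_plus ennreal_mult ennreal_indicator)
      also have "\<dots> \<le> ennreal (max_indicator G v x)"
        using max_indicator_remove_min[OF less.prems(1) I0] unfolding G'_def v'_def m_def
        by (intro ennreal_leI) auto
      finally show "ennreal m * indicator (\<Union>G) x + ennreal (max_indicator G' v' x)
          \<le> ennreal (max_indicator G v x)" .
    qed simp
    finally show ?thesis .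
  qed
qed

lemma set_integral_diff_Union_add:
  fixes g :: "'a \<Rightarrow> real"
  assumes "J \<in> sets M" "finite C" "C \<subseteq> sets M" "\<forall>K\<in>C. K \<subseteq> J"
    and "disjoint_family_on (\<lambda>K. K) C" and g: "set_integrable M J g"
  shows "(LINT x:J|M. g x) = (LINT x:(J - \<Union>C)|M. g x) + (\<Sum>K\<in>C. LINT x:K|M. g x)"
proof -
  have UC: "\<Union>C \<in> sets M" using assms(2,3) by blast
  have "J = (J - \<Union>C) \<union> \<Union>C" using assms(4) by blast
  then have "(LINT x:J|M. g x) = (LINT x:(J - \<Union>C) \<union> \<Union>C|M. g x)" by simp
  also have "\<dots> = (LINT x:(J - \<Union>C)|M. g x) + (LINT x:\<Union>C|M. g x)"
    using assms(1,4) UC by (intro set_integral_Un set_integrable_subset[OF g]) auto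
  moreover have "(LINT x:(\<Union>K\<in>C. K)|M. g x) = (\<Sum>K\<in>C. LINT x:K|M. g x)"
    using assms(3,4) set_integrable_subset[OF g]
    by (intro set_integral_finite_Union[OF assms(2,5)]) auto
  ultimately show ?thesis by simp
qed

section \<open>The filtration and the weight\<close>

locale atomic_filtration =
  fixes M :: "'a measure" and D :: "int \<Rightarrow> 'a set set"
  assumes filtration: "filtration_setting M D"
begin

lemma D_generates:
  "countable (D n) \<and> D n \<subseteq> sets M \<and> disjoint (D n) \<and>
   (\<forall>I\<in>D n. 0 < emeasure M I \<and> emeasure M I < \<infinity>) \<and>
   (\<forall>A\<in>sigma_sets (space M) (D n). \<exists>F\<subseteq>D n. A = \<Union>F)"
  using filtration unfolding filtration_setting_def by (elim conjE) (rule spec)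

lemma sigma_sets_D_mono:
  "n \<le> m \<Longrightarrow> sigma_sets (space M) (D n) \<subseteq> sigma_sets (space M) (D m)"
proof (induction m rule: int_ge_induct)
  case (step i)
  have "sigma_sets (space M) (D i) \<subseteq> sigma_sets (space M) (D (i + 1))"
    using filtration unfolding filtration_setting_def by (elim conjE) (rule spec)
  then show ?case using step by blast
qed simp

lemma countable_DD: "countable (DD D)"
  using D_generates unfolding DD_def by (simp add: countable_UN)

lemma DD_sets: "I \<in> DD D \<Longrightarrow> I \<in> sets M"
  using D_generates unfolding DD_def by blast

lemma emeasure_DD_pos: "I \<in> DD D \<Longrightarrow> 0 < emeasure M I"
  using D_generates unfolding DD_def by blast

lemma emeasure_DD_finite: "I \<in> DD D \<Longrightarrow> emeasure M I < \<infinity>"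
  using D_generates unfolding DD_def by blast

lemma measure_DD_pos: "I \<in> DD D \<Longrightarrow> 0 < measure M I"
  using emeasure_DD_pos emeasure_DD_finite by (simp add: measure_def enn2real_positive_iff)

lemma emeasure_DD_eq: "I \<in> DD D \<Longrightarrow> emeasure M I = ennreal (measure M I)"
  using emeasure_DD_finite[of I] by (simp add: emeasure_eq_ennreal_measure)

lemma empty_notin_DD: "{} \<notin> DD D"
  using emeasure_DD_pos by fastforce

text \<open>An atom of a coarser partition is a union of atoms of every finer one, so it either
  contains a finer atom or misses it.\<close>

lemma D_nested_or_disjoint:
  assumes "I \<in> D n" "J \<in> D m" "n \<le> m"
  shows "J \<subseteq> I \<or> I \<inter> J = {}"
proof -
  have "I \<in> sigma_sets (space M) (D m)"
    using sigma_sets_D_mono[OF assms(3)] assms(1) by blast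
  moreover have "\<forall>A\<in>sigma_sets (space M) (D m). \<exists>F\<subseteq>D m. A = \<Union>F"
    using D_generates by blast
  ultimately obtain F where F: "F \<subseteq> D m" "I = \<Union>F"
    by blast
  have "disjoint (D m)" using D_generates by blast
  then have "K \<inter> J = {}" if "K \<in> F" "K \<noteq> J" for K
    using F(1) assms(2) that unfolding disjoint_def by blast
  then show ?thesis using F(2) by (cases "J \<in> F") auto
qed

lemma laminar_DD: "laminar (DD D)"
  unfolding laminar_def DD_def
proof (intro ballI)
  fix I J assume "I \<in> (\<Union>n. D n)" "J \<in> (\<Union>n. D n)"
  then obtain n m where "I \<in> D n" "J \<in> D m" by blast
  then show "I \<subseteq> J \<or> J \<subseteq> I \<or> I \<inter> J = {}"
    using D_nested_or_disjoint[of I n J m] D_nested_or_disjoint[of J m I n] by fastforce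
qed

end

locale filtration_weight = atomic_filtration +
  fixes u :: "'a \<Rightarrow> real"
  assumes u_meas: "u \<in> borel_measurable M"
    and u_nonneg: "\<forall>x\<in>space M. 0 \<le> u x"
    and u_loc_int: "\<forall>I\<in>DD D. set_integrable M I u"
begin

definition umeas :: "'a set \<Rightarrow> real" where
  "umeas S = (LINT x:S|M. u x)"

lemma umeas_nonneg: "S \<in> sets M \<Longrightarrow> 0 \<le> umeas S"
  unfolding umeas_def set_lebesgue_integral_def
  by (rule integral_nonneg_AE) (use u_nonneg in \<open>auto split: split_indicator\<close>)

lemma set_integrable_u: "J \<in> DD D \<Longrightarrow> S \<in> sets M \<Longrightarrow> S \<subseteq> J \<Longrightarrow> set_integrable M S u"
  using u_loc_int by (blast intro: set_integrable_subset)

lemma umeas_mono: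
  assumes "J \<in> DD D" "S \<in> sets M" "S \<subseteq> J"
  shows "umeas S \<le> umeas J"
  using set_integrable_u[OF assms] u_loc_int assms u_nonneg
  unfolding umeas_def set_lebesgue_integral_def set_integrable_def
  by (intro integral_mono) (auto split: split_indicator)

lemma nn_integral_u_eq_umeas:
  assumes "I \<in> DD D"
  shows "(\<integral>\<^sup>+ y. ennreal (u y) * indicator I y \<partial>M) = ennreal (umeas I)"
proof -
  have "(\<integral>\<^sup>+ y. ennreal (u y) * indicator I y \<partial>M) = (\<integral>\<^sup>+ y. ennreal (indicator I y * u y) \<partial>M)"
    by (intro nn_integral_cong) (auto split: split_indicator)
  also have "\<dots> = ennreal (integral\<^sup>L M (\<lambda>y. indicator I y * u y))"
    using u_loc_int assms u_nonneg unfolding set_integrable_def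
    by (intro nn_integral_eq_integral) (auto split: split_indicator)
  also have "\<dots> = ennreal (umeas I)"
    unfolding umeas_def set_lebesgue_integral_def by simp
  finally show ?thesis .
qed

lemma avg_u_eq: "avg M I u = umeas I / measure M I"
  unfolding avg_def umeas_def ..

lemma avg_u_nonneg: "I \<in> DD D \<Longrightarrow> 0 \<le> avg M I u"
  unfolding avg_u_eq using umeas_nonneg[OF DD_sets] measure_DD_pos by (simp add: less_imp_le)

lemma avg_le_maxf:
  assumes I: "I \<in> DD D" and "I \<subseteq> L" "x \<in> I"
  shows "ennreal (avg M I u) \<le> maxf M D (\<lambda>y. indicator L y * u y) x"
proof -
  have "(\<integral>\<^sup>+ y. ennreal \<bar>indicator L y * u y\<bar> * indicator I y \<partial>M)
      = (\<integral>\<^sup>+ y. ennreal (u y) * indicator I y \<partial>M)"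
    using u_nonneg \<open>I \<subseteq> L\<close> by (intro nn_integral_cong) (auto split: split_indicator)
  also have "\<dots> = ennreal (umeas I)" by (rule nn_integral_u_eq_umeas[OF I])
  also have "\<dots> = ennreal (avg M I u) * emeasure M I"
    using measure_DD_pos[OF I] emeasure_DD_eq[OF I] umeas_nonneg[OF DD_sets[OF I]]
    by (simp add: avg_u_eq ennreal_mult[symmetric])
  finally have "ennreal (avg M I u)
      = (\<integral>\<^sup>+ y. ennreal \<bar>indicator L y * u y\<bar> * indicator I y \<partial>M) / emeasure M I"
    using emeasure_DD_pos[OF I] emeasure_DD_finite[OF I]
    by (simp add: ennreal_mult_divide_eq)
  also have "\<dots> \<le> maxf M D (\<lambda>y. indicator L y * u y) x"
    unfolding maxf_def using assms by (intro SUP_upper) auto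
  finally show ?thesis .
qed

lemma ustar_mult_emeasure:
  "I \<in> DD D \<Longrightarrow> ustar M D u I * emeasure M I
     = (\<integral>\<^sup>+ x\<in>I. maxf M D (\<lambda>y. indicator I y * u y) x \<partial>M)"
  unfolding ustar_def using emeasure_DD_pos[of I] emeasure_DD_finite[of I]
  by (simp add: ennreal_divide_times divide_eq_1_ennreal)

lemma avg_le_ustar:
  assumes I: "I \<in> DD D"
  shows "ennreal (avg M I u) \<le> ustar M D u I"
proof -
  have "ennreal (avg M I u) * emeasure M I
      \<le> (\<integral>\<^sup>+ x\<in>I. maxf M D (\<lambda>y. indicator I y * u y) x \<partial>M)"
    using avg_le_maxf[OF I subset_refl] DD_sets[OF I]
    by (subst nn_integral_cmult_indicator[symmetric])
      (auto intro!: nn_integral_mono split: split_indicator)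
  then show ?thesis
    using emeasure_DD_pos[OF I] emeasure_DD_finite[OF I] ustar_mult_emeasure[OF I]
    by (metis ennreal_mult_le_mult_iff mult.commute not_less_iff_gr_or_eq top.not_eq_extremum)
qed

text \<open>The sets of DD D on which the summand of the theorem is given by its formula; on the
  others it is 0 by definition.\<close>

definition nondegenerate :: "'a set \<Rightarrow> bool" where
  "nondegenerate I \<longleftrightarrow> I \<in> DD D \<and> ustar M D u I \<noteq> \<infinity> \<and> avg M I u \<noteq> 0"

definition ustar_real :: "'a set \<Rightarrow> real" where
  "ustar_real I = enn2real (ustar M D u I)"

definition ratio :: "'a set \<Rightarrow> real" where
  "ratio I = ustar_real I / avg M I u"

lemma nondegenerate_DD: "nondegenerate I \<Longrightarrow> I \<in> DD D"
  unfolding nondegenerate_def by simp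

lemma nondegenerate_avg_pos: "nondegenerate I \<Longrightarrow> 0 < avg M I u"
  using avg_u_nonneg unfolding nondegenerate_def by force

lemma nondegenerate_umeas_pos: "nondegenerate I \<Longrightarrow> 0 < umeas I"
  using nondegenerate_avg_pos measure_DD_pos[OF nondegenerate_DD]
  by (fastforce simp: avg_u_eq zero_less_divide_iff)

lemma nondegenerate_ustar_eq: "nondegenerate I \<Longrightarrow> ustar M D u I = ennreal (ustar_real I)"
  unfolding nondegenerate_def ustar_real_def by (simp add: less_top[symmetric])

lemma nondegenerate_avg_le_ustar_real:
  assumes "nondegenerate I"
  shows "avg M I u \<le> ustar_real I"
proof -
  have "ennreal (avg M I u) \<le> ennreal (ustar_real I)"
    using avg_le_ustar[OF nondegenerate_DD[OF assms]] nondegenerate_ustar_eq[OF assms] by simp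
  then show ?thesis unfolding ustar_real_def by (simp add: ennreal_le_iff)
qed

lemma nondegenerate_ustar_real_pos: "nondegenerate I \<Longrightarrow> 0 < ustar_real I"
  using nondegenerate_avg_pos nondegenerate_avg_le_ustar_real by fastforce

lemma nondegenerate_one_le_ratio: "nondegenerate I \<Longrightarrow> 1 \<le> ratio I"
  using nondegenerate_avg_pos nondegenerate_avg_le_ustar_real unfolding ratio_def by simp

lemma nondegenerate_ratio_umeas: "nondegenerate I \<Longrightarrow> ratio I * umeas I = ustar_real I * measure M I"
  using nondegenerate_umeas_pos[of I] measure_DD_pos[OF nondegenerate_DD, of I]
  unfolding ratio_def avg_u_eq by (simp add: field_simps)

lemma nondegenerate_integral_maxf:
  assumes "nondegenerate I"
  shows "(\<integral>\<^sup>+ x\<in>I. maxf M D (\<lambda>y. indicator I y * u y) x \<partial>M) = ennreal (ustar_real I * measure M I)"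
  using ustar_mult_emeasure[OF nondegenerate_DD[OF assms]] nondegenerate_ustar_eq[OF assms]
    emeasure_DD_eq[OF nondegenerate_DD[OF assms]] nondegenerate_ustar_real_pos[OF assms]
  by (simp add: ennreal_mult)

end

section \<open>Carleson sequences\<close>

locale carleson_weight = filtration_weight +
  fixes a :: "'a set \<Rightarrow> real"
  assumes a_nonneg: "\<forall>I\<in>DD D. 0 \<le> a I"
    and a_carleson: "carl_norm M D a < \<infinity>"
begin

definition carl :: real where
  "carl = enn2real (carl_norm M D a)"

lemma carl_nonneg: "0 \<le> carl"
  unfolding carl_def by simp

lemma carl_norm_eq: "carl_norm M D a = ennreal carl"
  unfolding carl_def using a_carleson by (simp add: less_top)

lemma sum_a_measure_le:
  assumes J: "J \<in> DD D" and G: "finite G" "G \<subseteq> DD D" "\<forall>I\<in>G. I \<subseteq> J"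
  shows "(\<Sum>I\<in>G. a I * measure M I) \<le> carl * measure M J"
proof -
  define q where "q = (\<integral>\<^sup>+ I. ennreal (\<bar>a I\<bar> * measure M I) \<partial>count_space {I\<in>DD D. I \<subseteq> J})"
  have "(\<Sum>I\<in>G. a I * measure M I) = (\<Sum>I\<in>G. \<bar>a I\<bar> * measure M I)"
    using G a_nonneg by (intro sum.cong) auto
  then have "ennreal (\<Sum>I\<in>G. a I * measure M I) = (\<integral>\<^sup>+ I. ennreal (\<bar>a I\<bar> * measure M I) \<partial>count_space G)"
    using G(1) by (simp add: nn_integral_count_space_finite sum_ennreal)
  also have "\<dots> \<le> q"
    unfolding q_def using G
    by (subst (1 2) nn_integral_count_space_indicator)
      (auto intro!: nn_integral_mono split: split_indicator)
  also have "q = q / emeasure M J * emeasure M J"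
    using emeasure_DD_pos[OF J] emeasure_DD_finite[OF J]
    by (simp add: ennreal_divide_times divide_eq_1_ennreal)
  also have "\<dots> \<le> carl_norm M D a * emeasure M J"
    unfolding carl_norm_def q_def using J by (intro mult_right_mono SUP_upper) auto
  also have "\<dots> = ennreal (carl * measure M J)"
    using carl_norm_eq emeasure_DD_eq[OF J] carl_nonneg by (simp add: ennreal_mult)
  finally show ?thesis using carl_nonneg by (simp add: ennreal_le_iff)
qed

lemma sum_a_measure_le_Union:
  assumes G: "finite G" "G \<subseteq> DD D"
  shows "(\<Sum>I\<in>G. a I * measure M I) \<le> carl * measure M (\<Union>G)"
proof -
  have lam: "laminar G" by (rule laminar_subset[OF laminar_DD G(2)])
  have max: "finite (maximal_sets G)" "maximal_sets G \<subseteq> DD D"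
    using G maximal_sets_subset by (auto intro: finite_maximal_sets)
  have "(\<Sum>I\<in>G. a I * measure M I) = (\<Sum>L\<in>maximal_sets G. \<Sum>I\<in>{I\<in>G. I \<subseteq> L}. a I * measure M I)"
    using G(1) lam empty_notin_DD G(2) by (intro sum_maximal_sets) auto
  also have "\<dots> \<le> (\<Sum>L\<in>maximal_sets G. carl * measure M L)"
    using G maximal_sets_subset by (intro sum_mono sum_a_measure_le) (auto intro: finite_subset)
  also have "\<dots> = carl * measure M (\<Union>(maximal_sets G))"
    using max disjoint_family_maximal_sets[OF lam] DD_sets emeasure_DD_finite[THEN less_imp_neq]
    by (subst measure_finite_Union[where A = "\<lambda>L. L", simplified])
      (auto simp: sum_distrib_left)
  also have "\<Union>(maximal_sets G) = \<Union>G" by (rule Union_maximal_sets[OF G(1)])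
  finally show ?thesis .
qed

lemma sum_a_umeas_le_integral_maxf:
  assumes L: "L \<in> DD D" and G: "finite G" "G \<subseteq> DD D" "\<forall>I\<in>G. I \<subseteq> L"
  shows "ennreal (\<Sum>I\<in>G. a I * umeas I)
    \<le> ennreal carl * (\<integral>\<^sup>+ x\<in>L. maxf M D (\<lambda>y. indicator L y * u y) x \<partial>M)"
proof -
  have "(\<Sum>I\<in>G. a I * umeas I) = (\<Sum>I\<in>G. a I * measure M I * avg M I u)"
  proof (rule sum.cong[OF refl])
    fix I assume "I \<in> G"
    then have "0 < measure M I" using G measure_DD_pos by auto
    then show "a I * umeas I = a I * measure M I * avg M I u" by (simp add: avg_u_eq)
  qed
  also have "ennreal \<dots> \<le> ennreal carl * (\<integral>\<^sup>+ x. ennreal (max_indicator G (\<lambda>I. avg M I u) x) \<partial>M)"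
  proof (rule sum_mult_le_integral_max_indicator)
    show "\<forall>H\<subseteq>G. (\<Sum>I\<in>H. a I * measure M I) \<le> carl * measure M (\<Union>H)"
    proof (intro allI impI)
      fix H assume "H \<subseteq> G"
      then show "(\<Sum>I\<in>H. a I * measure M I) \<le> carl * measure M (\<Union>H)"
        using G by (intro sum_a_measure_le_Union) (auto intro: finite_subset)
    qed
    show "\<forall>I\<in>G. 0 \<le> a I * measure M I" using G a_nonneg by auto
    show "\<forall>I\<in>G. 0 \<le> avg M I u" using G avg_u_nonneg by auto
    show "G \<subseteq> sets M" using G DD_sets by auto
  qed (use G(1) carl_nonneg in auto)
  also have "\<dots> \<le> ennreal carl * (\<integral>\<^sup>+ x\<in>L. maxf M D (\<lambda>y. indicator L y * u y) x \<partial>M)"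
  proof (intro mult_left_mono nn_integral_mono)
    fix x
    obtain J where J: "J \<in> insert {} G" "max_indicator G (\<lambda>I. avg M I u) x = avg M J u * indicator J x"
      using max_indicator_attained[OF G(1)] by blast
    show "ennreal (max_indicator G (\<lambda>I. avg M I u) x)
      \<le> maxf M D (\<lambda>y. indicator L y * u y) x * indicator L x"
    proof (cases "x \<in> J")
      case True
      then have "J \<in> G" using J(1) by auto
      then have "J \<in> DD D" "J \<subseteq> L" using G by auto
      then have "ennreal (avg M J u) \<le> maxf M D (\<lambda>y. indicator L y * u y) x" "x \<in> L"
        using avg_le_maxf True by auto
      then show ?thesis using J(2) True by simp
    qed (use J in simp)
  qed simp
  finally show ?thesis .
qed

lemma sum_a_umeas_ratio_le:
  assumes J: "J \<in> DD D" and F: "finite F" "\<forall>I\<in>F. nondegenerate I" and t: "1 \<le> t"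
  shows "(\<Sum>I\<in>{I\<in>F. I \<subseteq> J \<and> ratio I \<le> t}. a I * umeas I) \<le> t * carl * umeas J"
proof -
  define S where "S = {I\<in>F. I \<subseteq> J \<and> ratio I \<le> t}"
  have S: "finite S" "S \<subseteq> DD D" using F nondegenerate_DD unfolding S_def by auto
  have lam: "laminar S" by (rule laminar_subset[OF laminar_DD S(2)])
  have max: "finite (maximal_sets S)" "maximal_sets S \<subseteq> S"
    by (rule finite_maximal_sets[OF S(1)], rule maximal_sets_subset)
  have max_DD: "L \<in> DD D" if "L \<in> maximal_sets S" for L
    using that max(2) S(2) by blast
  have "(\<Sum>I\<in>S. a I * umeas I) = (\<Sum>L\<in>maximal_sets S. \<Sum>I\<in>{I\<in>S. I \<subseteq> L}. a I * umeas I)"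
    by (rule sum_maximal_sets[OF S(1) lam]) (use S(2) empty_notin_DD in blast)
  also have "\<dots> \<le> (\<Sum>L\<in>maximal_sets S. t * carl * umeas L)"
  proof (rule sum_mono)
    fix L assume "L \<in> maximal_sets S"
    then have "L \<in> S" using max(2) by blast
    then have L: "nondegenerate L" "ratio L \<le> t" using F(2) unfolding S_def by auto
    have "finite {I\<in>S. I \<subseteq> L}" "{I\<in>S. I \<subseteq> L} \<subseteq> DD D" "\<forall>I\<in>{I\<in>S. I \<subseteq> L}. I \<subseteq> L"
      using S by auto
    from sum_a_umeas_le_integral_maxf[OF nondegenerate_DD[OF L(1)] this]
    have "ennreal (\<Sum>I\<in>{I\<in>S. I \<subseteq> L}. a I * umeas I) \<le> ennreal (carl * (ratio L * umeas L))"
      using carl_nonneg nondegenerate_ustar_real_pos[OF L(1)] measure_DD_pos[OF nondegenerate_DD[OF L(1)]]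
      by (simp add: nondegenerate_integral_maxf[OF L(1)] nondegenerate_ratio_umeas[OF L(1)] ennreal_mult)
    then have "(\<Sum>I\<in>{I\<in>S. I \<subseteq> L}. a I * umeas I) \<le> carl * (ratio L * umeas L)"
      using carl_nonneg nondegenerate_one_le_ratio[OF L(1)] nondegenerate_umeas_pos[OF L(1)]
      by (subst (asm) ennreal_le_iff) auto
    also have "\<dots> \<le> carl * (t * umeas L)"
      using L(2) nondegenerate_umeas_pos[OF L(1)] carl_nonneg by (intro mult_left_mono) auto
    finally show "(\<Sum>I\<in>{I\<in>S. I \<subseteq> L}. a I * umeas I) \<le> t * carl * umeas L"
      by (simp add: ac_simps)
  qed
  also have "\<dots> = t * carl * umeas (\<Union>L\<in>maximal_sets S. L)"
  proof -
    have "umeas (\<Union>L\<in>maximal_sets S. L) = (\<Sum>L\<in>maximal_sets S. umeas L)"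
      unfolding umeas_def
      by (rule set_integral_finite_Union[OF max(1) disjoint_family_maximal_sets[OF lam]])
        (use max_DD u_loc_int DD_sets in auto)
    then show ?thesis by (simp add: sum_distrib_left)
  qed
  also have "\<dots> \<le> t * carl * umeas J"
  proof -
    have "(\<Union>L\<in>maximal_sets S. L) \<subseteq> J" using max(2) unfolding S_def by blast
    moreover have "(\<Union>L\<in>maximal_sets S. L) \<in> sets M"
      using max(1) max_DD DD_sets by blast
    ultimately show ?thesis
      using t carl_nonneg umeas_mono[OF J] by (simp add: mult_left_mono)
  qed
  finally show ?thesis unfolding S_def .
qed

end

section \<open>The weighted Carleson embedding\<close>

locale weighted_L2_function = filtration_weight +
  fixes f :: "'a \<Rightarrow> real"
  assumes f_meas: "f \<in> borel_measurable M"
    and f_L2: "(\<integral>\<^sup>+ x. ennreal ((f x)\<^sup>2 * u x) \<partial>M) < \<infinity>"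
begin

definition fu_int :: "'a set \<Rightarrow> real" where
  "fu_int S = (LINT x:S|M. f x * u x)"

definition f2u_int :: "'a set \<Rightarrow> real" where
  "f2u_int S = (LINT x:S|M. (f x)^2 * u x)"

definition f2u_total :: real where
  "f2u_total = integral\<^sup>L M (\<lambda>x. (f x)^2 * u x)"

lemma integrable_f2u: "integrable M (\<lambda>x. (f x)^2 * u x)"
  using f_meas u_meas u_nonneg f_L2 by (intro integrableI_nonneg) auto

lemma set_integrable_f2u: "S \<in> sets M \<Longrightarrow> set_integrable M S (\<lambda>x. (f x)^2 * u x)"
  unfolding set_integrable_def by (rule integrable_mult_indicator[OF _ integrable_f2u])

lemma set_integrable_fu:
  assumes J: "J \<in> DD D"
  shows "set_integrable M J (\<lambda>x. f x * u x)"
  unfolding set_integrable_def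
proof (rule Bochner_Integration.integrable_bound)
  show "integrable M (\<lambda>x. indicator J x *\<^sub>R ((f x)^2 * u x) + indicator J x *\<^sub>R u x)"
    using set_integrable_f2u[OF DD_sets[OF J]] u_loc_int J unfolding set_integrable_def by auto
  show "(\<lambda>x. indicator J x *\<^sub>R (f x * u x)) \<in> borel_measurable M"
    using f_meas u_meas DD_sets[OF J] by measurable
  have "\<bar>f x\<bar> * u x \<le> ((f x)^2 + 1) * u x" if "x \<in> space M" for x
  proof -
    have "\<bar>f x\<bar> \<le> (f x)^2 + 1"
    proof (cases "\<bar>f x\<bar> \<le> 1")
      case False
      then have "1 * \<bar>f x\<bar> \<le> \<bar>f x\<bar> * \<bar>f x\<bar>" by (intro mult_right_mono) auto
      then show ?thesis by (simp add: power2_eq_square)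
    qed (simp add: add_increasing)
    then show ?thesis using u_nonneg that by (intro mult_right_mono) auto
  qed
  then show "AE x in M. norm (indicator J x *\<^sub>R (f x * u x))
      \<le> norm (indicator J x *\<^sub>R ((f x)^2 * u x) + indicator J x *\<^sub>R u x)"
    using u_nonneg by (intro AE_I2) (auto simp: abs_mult algebra_simps split: split_indicator)
qed

lemma f2u_int_nonneg: "S \<in> sets M \<Longrightarrow> 0 \<le> f2u_int S"
  unfolding f2u_int_def set_lebesgue_integral_def
  by (rule integral_nonneg_AE) (use u_nonneg in \<open>auto split: split_indicator\<close>)

lemma f2u_int_le_total: "S \<in> sets M \<Longrightarrow> f2u_int S \<le> f2u_total"
  using set_integrable_f2u integrable_f2u u_nonneg
  unfolding f2u_int_def f2u_total_def set_lebesgue_integral_def set_integrable_def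
  by (intro integral_mono) (auto split: split_indicator)

lemma f2u_total_nonneg: "0 \<le> f2u_total"
  unfolding f2u_total_def by (rule integral_nonneg_AE) (use u_nonneg in auto)

lemma nn_integral_f2u_eq: "(\<integral>\<^sup>+ x. ennreal ((f x)^2 * u x) \<partial>M) = ennreal f2u_total"
  unfolding f2u_total_def by (rule nn_integral_eq_integral[OF integrable_f2u]) (use u_nonneg in auto)

lemma fu_int_square_le:
  assumes "J \<in> DD D" "S \<in> sets M" "S \<subseteq> J"
  shows "(fu_int S)^2 \<le> f2u_int S * umeas S"
proof -
  have ints: "integrable M (\<lambda>x. indicator S x * ((f x)^2 * u x))"
    "integrable M (\<lambda>x. indicator S x * (f x * u x))" "integrable M (\<lambda>x. indicator S x * u x)"
    using set_integrable_f2u[OF assms(2)] set_integrable_subset[OF set_integrable_fu[OF assms(1)]]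
      set_integrable_u[OF assms] assms(2,3)
    unfolding set_integrable_def by auto
  have quadratic: "0 \<le> f2u_int S - 2 * l * fu_int S + l^2 * umeas S" for l
  proof -
    have "0 \<le> integral\<^sup>L M (\<lambda>x. indicator S x * ((f x - l)^2 * u x))"
      by (rule integral_nonneg_AE) (use u_nonneg in \<open>auto split: split_indicator\<close>)
    also have "(\<lambda>x. indicator S x * ((f x - l)^2 * u x)) = (\<lambda>x. indicator S x * ((f x)^2 * u x)
        - (2 * l) * (indicator S x * (f x * u x)) + l^2 * (indicator S x * u x))"
      by (rule ext) (simp add: power2_eq_square algebra_simps)
    also have "integral\<^sup>L M \<dots> = f2u_int S - 2 * l * fu_int S + l^2 * umeas S"
      using ints unfolding f2u_int_def fu_int_def umeas_def set_lebesgue_integral_def by simp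
    finally show ?thesis .
  qed
  show ?thesis
  proof (cases "umeas S = 0")
    case True
    have "fu_int S = 0"
    proof (rule ccontr)
      assume "fu_int S \<noteq> 0"
      then have "f2u_int S - 2 * ((f2u_int S + 1) / (2 * fu_int S)) * fu_int S = -1"
        by (simp add: field_simps)
      then show False using quadratic[of "(f2u_int S + 1) / (2 * fu_int S)"] True by simp
    qed
    then show ?thesis using True by simp
  next
    case False
    then have pos: "0 < umeas S" using umeas_nonneg[OF assms(2)] by simp
    have "f2u_int S - 2 * (fu_int S / umeas S) * fu_int S + (fu_int S / umeas S)^2 * umeas S
        = f2u_int S - (fu_int S)^2 / umeas S"
      using pos by (simp add: field_simps power2_eq_square)
    then have "(fu_int S)^2 / umeas S \<le> f2u_int S" using quadratic[of "fu_int S / umeas S"] by simp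
    then show ?thesis using pos by (simp add: divide_le_eq)
  qed
qed

text \<open>The concavity step of the Bellman function B(X, Y, W, m) = 4 (X - Y^2 / (W + m)) at
  X = f2u_int, Y = fu_int, W = umeas: split J into its maximal proper subsets K in the family
  and the remainder J - \<Union>C, then use Engel's form of Cauchy-Schwarz.\<close>

lemma fu_int_square_div_le:
  assumes J: "J \<in> DD D" and C: "finite C" "C \<subseteq> DD D" "\<forall>K\<in>C. K \<subseteq> J"
    "disjoint_family_on (\<lambda>K. K) C"
    and m: "\<forall>K\<in>C. 0 \<le> m K \<and> 0 < umeas K + m K"
  shows "(fu_int J)^2 / (umeas J + (\<Sum>K\<in>C. m K))
    \<le> (\<Sum>K\<in>C. (fu_int K)^2 / (umeas K + m K)) + f2u_int (J - \<Union>C)"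
proof -
  define R where "R = J - \<Union>C"
  have CM: "C \<subseteq> sets M" using C(2) DD_sets by blast
  have R: "R \<in> sets M" "R \<subseteq> J"
    using DD_sets[OF J] C(1) CM unfolding R_def by auto
  have split_fu: "fu_int J = fu_int R + (\<Sum>K\<in>C. fu_int K)"
    unfolding fu_int_def R_def
    by (rule set_integral_diff_Union_add[OF DD_sets[OF J] C(1) CM C(3,4) set_integrable_fu[OF J]])
  have split_u: "umeas J = umeas R + (\<Sum>K\<in>C. umeas K)"
    unfolding umeas_def R_def
    using set_integral_diff_Union_add[OF DD_sets[OF J] C(1) CM C(3,4)] u_loc_int J by blast
  have cs: "(fu_int R)^2 \<le> f2u_int R * umeas R" by (rule fu_int_square_le[OF J R])
  have uR: "0 \<le> umeas R" by (rule umeas_nonneg[OF R(1)])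
  have weights: "0 \<le> (\<Sum>K\<in>C. umeas K + m K)" using m by (intro sum_nonneg) (simp add: less_imp_le)
  have empty: "(\<Sum>K\<in>C. fu_int K) = 0" if "(\<Sum>K\<in>C. umeas K + m K) = 0"
  proof -
    have "C = {}"
    proof (rule ccontr)
      assume "C \<noteq> {}"
      have "0 < (\<Sum>K\<in>C. umeas K + m K)"
        by (rule sum_pos[OF C(1) \<open>C \<noteq> {}\<close>]) (use m in auto)
      then show False using that by simp
    qed
    then show ?thesis by simp
  qed
  have "(fu_int J)^2 / (umeas J + (\<Sum>K\<in>C. m K))
      = ((\<Sum>K\<in>C. fu_int K) + fu_int R)^2 / ((\<Sum>K\<in>C. umeas K + m K) + umeas R)"
    using split_fu split_u by (simp add: sum.distrib algebra_simps)
  also have "\<dots> \<le> (\<Sum>K\<in>C. fu_int K)^2 / (\<Sum>K\<in>C. umeas K + m K) + (fu_int R)^2 / umeas R"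
    using weights uR cs empty by (intro power2_add_divide_add_le) auto
  also have "(\<Sum>K\<in>C. fu_int K)^2 / (\<Sum>K\<in>C. umeas K + m K) \<le> (\<Sum>K\<in>C. (fu_int K)^2 / (umeas K + m K))"
    using C(1) m by (intro power2_sum_divide_sum_le) auto
  also have "(fu_int R)^2 / umeas R \<le> f2u_int R"
    using cs uR f2u_int_nonneg[OF R(1)] by (cases "umeas R = 0") (auto simp: divide_le_eq)
  finally show ?thesis unfolding R_def by simp
qed

text \<open>Induction from the leaves of the laminar family upwards; bellman_jump_le is the gain
  of the Bellman function when the mass c J is added at the top.\<close>

lemma bellman_estimate:
  assumes F: "finite F" "F \<subseteq> DD D" and pos: "\<forall>I\<in>F. 0 < umeas I" and c: "\<forall>I\<in>F. 0 \<le> c I"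
    and packing: "\<forall>J\<in>F. (\<Sum>I\<in>{I\<in>F. I \<subseteq> J}. c I) \<le> umeas J"
  shows "J \<in> F \<Longrightarrow> (\<Sum>I\<in>{I\<in>F. I \<subseteq> J}. c I * (fu_int I / umeas I)^2)
    \<le> 4 * (f2u_int J - (fu_int J)^2 / (umeas J + (\<Sum>I\<in>{I\<in>F. I \<subseteq> J}. c I)))"
proof (induction "card {I\<in>F. I \<subseteq> J}" arbitrary: J rule: less_induct)
  case less
  define m where "m K = (\<Sum>I\<in>{I\<in>F. I \<subseteq> K}. c I)" for K
  define g where "g I = c I * (fu_int I / umeas I)^2" for I
  define C where "C = maximal_sets {I\<in>F. I \<subset> J}"
  have J: "J \<in> F" "J \<in> DD D" using less.prems F(2) by auto
  have lam: "laminar F" by (rule laminar_subset[OF laminar_DD F(2)])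
  have no_empty: "{} \<notin> F" using F(2) empty_notin_DD by blast
  have C: "finite C" "C \<subseteq> F" "\<forall>K\<in>C. K \<subset> J"
    using F(1) maximal_sets_subset[of "{I\<in>F. I \<subset> J}"] unfolding C_def
    by (auto intro: finite_maximal_sets)
  have C_DD: "C \<subseteq> DD D" using C(2) F(2) by blast
  have disj: "disjoint_family_on (\<lambda>K. K) C"
    unfolding C_def by (rule disjoint_family_maximal_sets[OF laminar_subset[OF lam]]) blast
  have m_nonneg: "0 \<le> m K" for K
    unfolding m_def using c by (intro sum_nonneg) auto
  have IH: "(\<Sum>I\<in>{I\<in>F. I \<subseteq> K}. g I) \<le> 4 * (f2u_int K - (fu_int K)^2 / (umeas K + m K))"
    if K: "K \<in> C" for K
  proof -
    have "K \<subset> J" using C(3) K by blast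
    then have "{I\<in>F. I \<subseteq> K} \<subseteq> {I\<in>F. I \<subseteq> J}" "J \<in> {I\<in>F. I \<subseteq> J} - {I\<in>F. I \<subseteq> K}"
      using J(1) by auto
    then have "{I\<in>F. I \<subseteq> K} \<subset> {I\<in>F. I \<subseteq> J}" by blast
    then have "card {I\<in>F. I \<subseteq> K} < card {I\<in>F. I \<subseteq> J}"
      using F(1) by (intro psubset_card_mono) auto
    then show ?thesis using less.hyps C(2) K unfolding g_def m_def by blast
  qed
  have split_c: "m J = c J + (\<Sum>K\<in>C. m K)"
    unfolding m_def C_def by (rule sum_below_children[OF F(1) lam no_empty J(1)])
  have split_g: "(\<Sum>I\<in>{I\<in>F. I \<subseteq> J}. g I) = g J + (\<Sum>K\<in>C. \<Sum>I\<in>{I\<in>F. I \<subseteq> K}. g I)"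
    unfolding C_def by (rule sum_below_children[OF F(1) lam no_empty J(1)])
  have split_f2u: "f2u_int J = f2u_int (J - \<Union>C) + (\<Sum>K\<in>C. f2u_int K)"
    unfolding f2u_int_def using C_DD DD_sets C(3) J(2)
    by (intro set_integral_diff_Union_add[OF DD_sets[OF J(2)] C(1) _ _ disj set_integrable_f2u])
      auto
  have step: "(fu_int J)^2 / (umeas J + m J - c J)
      \<le> (\<Sum>K\<in>C. (fu_int K)^2 / (umeas K + m K)) + f2u_int (J - \<Union>C)"
    using fu_int_square_div_le[OF J(2) C(1) C_DD _ disj, of m] C pos m_nonneg split_c
    by (fastforce simp: add_pos_nonneg)
  have jump: "g J \<le> 4 * ((fu_int J)^2 / (umeas J + m J - c J)) - 4 * ((fu_int J)^2 / (umeas J + m J))"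
    unfolding g_def times_divide_eq_right
    using pos c packing J(1) split_c m_nonneg sum_nonneg[of C m]
    by (intro bellman_jump_le) (auto simp: m_def)
  have "(\<Sum>I\<in>{I\<in>F. I \<subseteq> J}. g I)
      \<le> g J + (\<Sum>K\<in>C. 4 * (f2u_int K - (fu_int K)^2 / (umeas K + m K)))"
    unfolding split_g using IH by (intro add_left_mono sum_mono) auto
  also have "\<dots> = g J + 4 * (\<Sum>K\<in>C. f2u_int K) - 4 * (\<Sum>K\<in>C. (fu_int K)^2 / (umeas K + m K))"
    by (simp add: sum_distrib_left sum_subtractf algebra_simps)
  also have "\<dots> \<le> 4 * f2u_int (J - \<Union>C) + 4 * (\<Sum>K\<in>C. f2u_int K)
      - 4 * ((fu_int J)^2 / (umeas J + m J))"
    using step jump by linarith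
  also have "\<dots> = 4 * (f2u_int J - (fu_int J)^2 / (umeas J + m J))"
    unfolding split_f2u by (simp add: algebra_simps)
  finally show ?case unfolding g_def m_def .
qed

lemma weighted_carleson_embedding:
  assumes F: "finite F" "F \<subseteq> DD D" and pos: "\<forall>I\<in>F. 0 < umeas I" and c: "\<forall>I\<in>F. 0 \<le> c I"
    and packing: "\<forall>J\<in>F. (\<Sum>I\<in>{I\<in>F. I \<subseteq> J}. c I) \<le> umeas J"
  shows "(\<Sum>I\<in>F. c I * (fu_int I / umeas I)^2) \<le> 4 * f2u_total"
proof -
  have lam: "laminar F" by (rule laminar_subset[OF laminar_DD F(2)])
  have max: "finite (maximal_sets F)" "maximal_sets F \<subseteq> F"
    by (rule finite_maximal_sets[OF F(1)], rule maximal_sets_subset)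
  have max_sets: "L \<in> sets M" if "L \<in> maximal_sets F" for L
    using that max(2) F(2) DD_sets by blast
  have "(\<Sum>I\<in>F. c I * (fu_int I / umeas I)^2)
      = (\<Sum>L\<in>maximal_sets F. \<Sum>I\<in>{I\<in>F. I \<subseteq> L}. c I * (fu_int I / umeas I)^2)"
    by (rule sum_maximal_sets[OF F(1) lam]) (use F(2) empty_notin_DD in blast)
  also have "\<dots> \<le> (\<Sum>L\<in>maximal_sets F. 4 * f2u_int L)"
  proof (rule sum_mono)
    fix L assume "L \<in> maximal_sets F"
    then have L: "L \<in> F" using max(2) by blast
    have "0 \<le> (fu_int L)^2 / (umeas L + (\<Sum>I\<in>{I\<in>F. I \<subseteq> L}. c I))"
      using pos c L by (intro divide_nonneg_nonneg add_nonneg_nonneg sum_nonneg) auto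
    then show "(\<Sum>I\<in>{I\<in>F. I \<subseteq> L}. c I * (fu_int I / umeas I)^2) \<le> 4 * f2u_int L"
      using bellman_estimate[OF F pos c packing L] by (simp add: right_diff_distrib)
  qed
  also have "\<dots> = 4 * f2u_int (\<Union>L\<in>maximal_sets F. L)"
    unfolding f2u_int_def sum_distrib_left[symmetric] using max_sets
    by (subst set_integral_finite_Union[OF max(1) disjoint_family_maximal_sets[OF lam]])
      (auto intro: set_integrable_f2u)
  also have "\<dots> \<le> 4 * f2u_total"
    using max(1) max_sets by (intro mult_left_mono f2u_int_le_total) auto
  finally show ?thesis .
qed

lemma weighted_carleson_embedding_scaled:
  assumes F: "finite F" "F \<subseteq> DD D" and pos: "\<forall>I\<in>F. 0 < umeas I" and c: "\<forall>I\<in>F. 0 \<le> c I"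
    and K: "0 \<le> K" and packing: "\<forall>J\<in>F. (\<Sum>I\<in>{I\<in>F. I \<subseteq> J}. c I) \<le> K * umeas J"
  shows "(\<Sum>I\<in>F. c I * (fu_int I / umeas I)^2) \<le> 4 * K * f2u_total"
proof (cases "K = 0")
  case True
  have "c J = 0" if "J \<in> F" for J
  proof -
    have "c J \<le> (\<Sum>I\<in>{I\<in>F. I \<subseteq> J}. c I)"
      using F(1) c that by (intro member_le_sum) auto
    then show ?thesis using packing c that True by fastforce
  qed
  then show ?thesis using True by simp
next
  case False
  have "(\<Sum>I\<in>F. c I / K * (fu_int I / umeas I)^2) \<le> 4 * f2u_total"
  proof (rule weighted_carleson_embedding[OF F pos])
    show "\<forall>I\<in>F. 0 \<le> c I / K" using c K by simp
    show "\<forall>J\<in>F. (\<Sum>I\<in>{I\<in>F. I \<subseteq> J}. c I / K) \<le> umeas J"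
      using packing K False by (simp add: sum_divide_distrib[symmetric] divide_le_eq mult.commute)
  qed
  then show ?thesis
    using K False by (simp add: sum_divide_distrib[symmetric] divide_le_eq mult.commute mult.left_commute)
qed

end

locale carleson_embedding = carleson_weight M D u a + weighted_L2_function M D u f
  for M :: "'a measure" and D u a f +
  fixes \<alpha> :: "real \<Rightarrow> real"
  assumes alpha_pos: "\<forall>t\<ge>1. 0 < \<alpha> t"
    and alpha_mono: "mono_on {1..} \<alpha>"
    and alpha_int: "set_integrable lborel {1..} (\<lambda>t. 1 / (t * \<alpha> t))"
begin

definition C_alpha :: real where
  "C_alpha = 1 / \<alpha> 1 + (LINT t:{1..}|lborel. 1 / (t * \<alpha> t))"

lemma t_alpha_pos: "1 \<le> t \<Longrightarrow> 0 < t * \<alpha> t"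
  using alpha_pos by simp

lemma C_alpha_nonneg: "0 \<le> C_alpha"
proof -
  have "0 \<le> (LINT t:{1..}|lborel. 1 / (t * \<alpha> t))"
    unfolding set_lebesgue_integral_def
    by (rule integral_nonneg_AE, rule AE_I2)
      (auto simp: t_alpha_pos less_imp_le split: split_indicator)
  then show ?thesis unfolding C_alpha_def using alpha_pos by (simp add: less_imp_le)
qed

lemma nondegenerate_weight_nonneg:
  assumes "nondegenerate I"
  shows "0 \<le> a I * umeas I * (1 / (ratio I * \<alpha> (ratio I)))"
proof -
  have "0 \<le> a I" "0 < umeas I" "0 < ratio I * \<alpha> (ratio I)"
    using a_nonneg nondegenerate_DD[OF assms] nondegenerate_umeas_pos[OF assms]
      t_alpha_pos[OF nondegenerate_one_le_ratio[OF assms]] by auto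
  then show ?thesis by simp
qed

lemma sum_a_umeas_alpha_le:
  assumes J: "J \<in> DD D" and F: "finite F" "\<forall>I\<in>F. nondegenerate I"
  shows "(\<Sum>I\<in>{I\<in>F. I \<subseteq> J}. a I * umeas I * (1 / (ratio I * \<alpha> (ratio I))))
    \<le> carl * umeas J * C_alpha"
  unfolding C_alpha_def
proof (rule sum_mult_antitone_le[OF _ _ alpha_int])
  show "antimono_on {1..} (\<lambda>t. 1 / (t * \<alpha> t))"
    using alpha_pos alpha_mono
    by (intro monotone_onI) (auto intro!: divide_left_mono mult_mono simp: mono_on_def)
  show "\<forall>t\<ge>1. t * (1 / (t * \<alpha> t)) \<le> 1 / \<alpha> 1"
    using alpha_pos alpha_mono by (auto intro!: divide_left_mono simp: mono_on_def)
  show "\<forall>t\<ge>1. (\<Sum>I\<in>{I\<in>{I\<in>F. I \<subseteq> J}. ratio I \<le> t}. a I * umeas I) \<le> carl * umeas J * t"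
  proof (intro allI impI)
    fix t :: real assume "1 \<le> t"
    have "{I\<in>{I\<in>F. I \<subseteq> J}. ratio I \<le> t} = {I\<in>F. I \<subseteq> J \<and> ratio I \<le> t}" by auto
    then show "(\<Sum>I\<in>{I\<in>{I\<in>F. I \<subseteq> J}. ratio I \<le> t}. a I * umeas I) \<le> carl * umeas J * t"
      using sum_a_umeas_ratio_le[OF J F \<open>1 \<le> t\<close>] by (simp add: ac_simps)
  qed
  show "\<forall>I\<in>{I\<in>F. I \<subseteq> J}. 0 \<le> a I * umeas I"
  proof
    fix I assume "I \<in> {I\<in>F. I \<subseteq> J}"
    then have "nondegenerate I" using F(2) by blast
    then have "0 \<le> a I" "0 < umeas I"
      using a_nonneg nondegenerate_DD nondegenerate_umeas_pos by auto
    then show "0 \<le> a I * umeas I" by simp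
  qed
  show "\<forall>t\<ge>1. 0 \<le> 1 / (t * \<alpha> t)"
    using t_alpha_pos by (simp add: less_imp_le)
qed (use F carl_nonneg umeas_nonneg[OF DD_sets[OF J]] nondegenerate_one_le_ratio in auto)

lemma lhs_term_nondegenerate:
  assumes I: "nondegenerate I"
  shows "lhs_term M D \<alpha> u f a I
    = a I * umeas I * (1 / (ratio I * \<alpha> (ratio I))) * (fu_int I / umeas I)^2"
proof -
  have pos: "0 < measure M I" "0 < umeas I" "0 < ustar_real I" "0 < \<alpha> (ratio I)"
    using measure_DD_pos[OF nondegenerate_DD[OF I]] nondegenerate_umeas_pos[OF I]
      nondegenerate_ustar_real_pos[OF I] nondegenerate_one_le_ratio[OF I] alpha_pos by auto
  have "\<not> (ustar M D u I = \<infinity> \<or> avg M I u = 0)"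
    using I unfolding nondegenerate_def by simp
  then have "lhs_term M D \<alpha> u f a I
      = (fu_int I / measure M I)^2 / (\<alpha> (ratio I) * ustar_real I) * a I * measure M I"
    unfolding lhs_term_def avg_def fu_int_def ratio_def ustar_real_def by simp
  also have "\<dots> = a I * (fu_int I)^2 / ((ustar_real I * measure M I) * \<alpha> (ratio I))"
    using pos by (simp add: field_simps power2_eq_square)
  also have "\<dots> = a I * (fu_int I)^2 / ((ratio I * umeas I) * \<alpha> (ratio I))"
    by (simp add: nondegenerate_ratio_umeas[OF I])
  also have "\<dots> = a I * umeas I * (1 / (ratio I * \<alpha> (ratio I))) * (fu_int I / umeas I)^2"
    using pos by (simp add: field_simps power2_eq_square)
  finally show ?thesis .
qed

lemma lhs_term_degenerate: "I \<in> DD D \<Longrightarrow> \<not> nondegenerate I \<Longrightarrow> lhs_term M D \<alpha> u f a I = 0"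
  unfolding nondegenerate_def lhs_term_def by auto

lemma lhs_term_nonneg: "I \<in> DD D \<Longrightarrow> 0 \<le> lhs_term M D \<alpha> u f a I"
  using lhs_term_nondegenerate[of I] lhs_term_degenerate[of I] nondegenerate_weight_nonneg[of I]
  by (cases "nondegenerate I") (simp_all del: times_divide_eq_right)

lemma sum_lhs_term_le:
  assumes "finite F" "F \<subseteq> DD D"
  shows "(\<Sum>I\<in>F. lhs_term M D \<alpha> u f a I) \<le> 4 * C_alpha * carl * f2u_total"
proof -
  define F' where "F' = {I\<in>F. nondegenerate I}"
  have F': "finite F'" "F' \<subseteq> DD D" "\<forall>I\<in>F'. nondegenerate I"
    using assms unfolding F'_def by auto
  have "(\<Sum>I\<in>F. lhs_term M D \<alpha> u f a I) = (\<Sum>I\<in>F'. lhs_term M D \<alpha> u f a I)"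
    using assms lhs_term_degenerate unfolding F'_def by (intro sum.mono_neutral_right) auto
  also have "\<dots> = (\<Sum>I\<in>F'. a I * umeas I * (1 / (ratio I * \<alpha> (ratio I))) * (fu_int I / umeas I)^2)"
    using F'(3) lhs_term_nondegenerate by simp
  also have "\<dots> \<le> 4 * (carl * C_alpha) * f2u_total"
  proof (rule weighted_carleson_embedding_scaled[OF F'(1,2)])
    show "\<forall>I\<in>F'. 0 < umeas I" using F'(3) nondegenerate_umeas_pos by blast
    show "\<forall>I\<in>F'. 0 \<le> a I * umeas I * (1 / (ratio I * \<alpha> (ratio I)))"
      using F'(3) nondegenerate_weight_nonneg by blast
    show "0 \<le> carl * C_alpha" using carl_nonneg C_alpha_nonneg by simp
    show "\<forall>J\<in>F'. (\<Sum>I\<in>{I\<in>F'. I \<subseteq> J}. a I * umeas I * (1 / (ratio I * \<alpha> (ratio I))))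
        \<le> carl * C_alpha * umeas J"
      using sum_a_umeas_alpha_le[OF _ F'(1,3)] F'(2) by (auto simp: ac_simps)
  qed
  finally show ?thesis by (simp add: ac_simps)
qed

end

theorem theorem4p2:
  fixes M :: "'a measure" and D :: "int \<Rightarrow> 'a set set"
    and a :: "'a set \<Rightarrow> real" and \<alpha> :: "real \<Rightarrow> real"
    and u f :: "'a \<Rightarrow> real"
  assumes setting: "filtration_setting M D"
    and a_nonneg: "\<forall>I\<in>DD D. 0 \<le> a I"
    and a_carleson: "carl_norm M D a < \<infinity>"
    and alpha_pos: "\<forall>t\<ge>1. 0 < \<alpha> t"
    and alpha_mono: "mono_on {1..} \<alpha>"
    and alpha_int: "set_integrable lborel {1..} (\<lambda>t. 1 / (t * \<alpha> t))"
    and u_meas: "u \<in> borel_measurable M"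
    and u_nonneg: "\<forall>x\<in>space M. 0 \<le> u x"
    and u_loc_int: "\<forall>I\<in>DD D. set_integrable M I u"
    and f_meas: "f \<in> borel_measurable M"
    and f_L2: "(\<integral>\<^sup>+ x. ennreal ((f x)\<^sup>2 * u x) \<partial>M) < \<infinity>"
  shows "(\<integral>\<^sup>+ I. ennreal (lhs_term M D \<alpha> u f a I) \<partial>count_space (DD D))
           \<le> ennreal (4 * (1 / \<alpha> 1 + set_lebesgue_integral lborel {1..} (\<lambda>t. 1 / (t * \<alpha> t))))
             * carl_norm M D a * (\<integral>\<^sup>+ x. ennreal ((f x)\<^sup>2 * u x) \<partial>M)"
proof -
  interpret carleson_embedding M D u a f \<alpha>
    using assms by unfold_locales
  have "ennreal (4 * C_alpha) * carl_norm M D a * (\<integral>\<^sup>+ x. ennreal ((f x)\<^sup>2 * u x) \<partial>M)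
      = ennreal (4 * C_alpha * carl * f2u_total)"
    using C_alpha_nonneg carl_nonneg f2u_total_nonneg
    by (simp add: carl_norm_eq nn_integral_f2u_eq ennreal_mult)
  moreover have "(\<integral>\<^sup>+ I. ennreal (lhs_term M D \<alpha> u f a I) \<partial>count_space (DD D))
      \<le> ennreal (4 * C_alpha * carl * f2u_total)"
  proof (rule nn_integral_count_space_le_finite_sums[OF countable_DD])
    fix F assume F: "finite F" "F \<subseteq> DD D"
    then have "(\<Sum>I\<in>F. ennreal (lhs_term M D \<alpha> u f a I)) = ennreal (\<Sum>I\<in>F. lhs_term M D \<alpha> u f a I)"
      using lhs_term_nonneg by (intro sum_ennreal) auto
    also have "\<dots> \<le> ennreal (4 * C_alpha * carl * f2u_total)"
      by (rule ennreal_leI[OF sum_lhs_term_le[OF F]])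
    finally show "(\<Sum>I\<in>F. ennreal (lhs_term M D \<alpha> u f a I)) \<le> ennreal (4 * C_alpha * carl * f2u_total)" .
  qed
  ultimately show ?thesis unfolding C_alpha_def by simp
qed

end
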